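(* Let $\mathcal{X}\subseteq\mathbb{R}^d$ be a nonempty closed convex set and let $F\colon\mathcal{X}\to\mathbb{R}^d$ be monotone and $\beta$-smooth with respect to the $\ell_2$-norm. Consider the deterministic setting, i.e. $\widehat{F(x)}=F(x)$ for all queried points. Run Algorithm AdaPEG-Unbounded (described in the context) with parameters $\gamma_0>0$, $\eta>0$, and let $\bar x_T$ be its output. Let $D>0$ be any fixed value. Then \[\mathrm{Err}_D(\bar x_T)\le\frac1T\left(\frac{1}{2\gamma_0}\frac{D^4}{\eta^2}\beta^2+\frac{\gamma_0}{2}D^2+\frac{8}{\gamma_0}\beta^2\eta^2+\frac1{\gamma_0}\|F(x_\tau)-F(x_{\tau-1})\|^2+\frac1{\gamma_0}\|F(x_{\tau-1})-F(x_{\tau-2})\|^2\right),\] where $\tau$ is the last iteration $t$ such that $\gamma_{t-2}\le2\sqrt2\beta$. In particular, setting $\eta=\Theta(D)$ and $\gamma_0=1$, \[\mathrm{Err}_D(\bar x_T)\le O\left(\frac{\beta^2D^2+\|F(x_\tau)-F(x_{\tau-1})\|^2+\|F(x_{\tau-1})-F(x_{\tau-2})\|^2}{T}\right).\]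
   Context: $\|\cdot\|$ is the Euclidean norm. Monotone: $\langle F(x)-F(y),x-y\rangle\ge0$; $\beta$-smooth: $\|F(x)-F(y)\|\le\beta\|x-y\|$. $\mathrm{Err}_D(x)=\sup\{\langle F(y),x-y\rangle: y\in\mathcal{X},\ \|y-x_0\|\le D\}$ with $x_0$ the initial point. Algorithm AdaPEG-Unbounded: $x_0=z_0\in\mathcal{X}$, $\gamma_{-1}=0$. For $t=1,\dots,T$: $x_t=\arg\min_{u\in\mathcal{X}}\{\langle F(x_{t-1}),u\rangle+\tfrac12\gamma_{t-2}\|u-z_{t-1}\|^2+\tfrac12(\gamma_{t-1}-\gamma_{t-2})\|u-x_0\|^2\}$; $z_t=\arg\min_{u\in\mathcal{X}}\{\langle F(x_t),u\rangle+\tfrac12\gamma_{t-2}\|u-z_{t-1}\|^2+\tfrac12(\gamma_{t-1}-\gamma_{t-2})\|u-x_0\|^2\}$; $\gamma_t=\frac1\eta\sqrt{\eta^2\gamma_0^2+\sum_{s=1}^t\|F(x_s)-F(x_{s-1})\|^2}$. Output $\bar x_T=\frac1T\sum_{t=1}^Tx_t$. *)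

theory Defs
  imports "HOL-Analysis.Analysis"
begin

definition monotone_op :: "'a::real_inner set \<Rightarrow> ('a \<Rightarrow> 'a) \<Rightarrow> bool" where
  "monotone_op X F \<longleftrightarrow> (\<forall>x\<in>X. \<forall>y\<in>X. inner (F x - F y) (x - y) \<ge> 0)"

definition smooth_op :: "'a::real_normed_vector set \<Rightarrow> real \<Rightarrow> ('a \<Rightarrow> 'a) \<Rightarrow> bool" where
  "smooth_op X \<beta> F \<longleftrightarrow> (\<forall>x\<in>X. \<forall>y\<in>X. norm (F x - F y) \<le> \<beta> * norm (x - y))"

definition Err :: "'a::real_inner set \<Rightarrow> ('a \<Rightarrow> 'a) \<Rightarrow> 'a \<Rightarrow> real \<Rightarrow> 'a \<Rightarrow> real" where
  "Err X F x0 D x = (SUP y\<in>{y\<in>X. norm (y - x0) \<le> D}. inner (F y) (x - y))"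

text \<open>Step sizes gamma_t, indexed by integers so that gamma_{-1} = 0.
  For t >= 0: gamma_t = (1/eta) * sqrt(eta^2 gamma0^2 + sum_{s=1..t} norm(F(x_s) - F(x_{s-1}))^2).\<close>
definition gam :: "real \<Rightarrow> real \<Rightarrow> ('a::real_normed_vector \<Rightarrow> 'a) \<Rightarrow> (nat \<Rightarrow> 'a) \<Rightarrow> int \<Rightarrow> real" where
  "gam \<eta> \<gamma>0 F x t = (if t < 0 then 0 else
     (1 / \<eta>) * sqrt (\<eta>\<^sup>2 * \<gamma>0\<^sup>2 + (\<Sum>s\<in>{1..nat t}. (norm (F (x s) - F (x (s - 1))))\<^sup>2)))"

definition prox_obj :: "'a::real_inner \<Rightarrow> real \<Rightarrow> 'a \<Rightarrow> real \<Rightarrow> 'a \<Rightarrow> 'a \<Rightarrow> real" where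
  "prox_obj g a z b x0 u = inner g u + a / 2 * (norm (u - z))\<^sup>2 + b / 2 * (norm (u - x0))\<^sup>2"

definition is_argmin_on :: "'a set \<Rightarrow> ('a \<Rightarrow> real) \<Rightarrow> 'a \<Rightarrow> bool" where
  "is_argmin_on X f u \<longleftrightarrow> u \<in> X \<and> (\<forall>v\<in>X. f u \<le> f v)"

end

theory Submission
  imports Defs
begin

(* Both prox steps of iteration t share the centre z_(t-1), so their first-order optimality
   conditions yield a one-step regret bound in which the price of optimism,
   |F x_t - F x_(t-1)|^2 / gamma_(t-1), is paid for by the negative stability terms
   gamma/2 (|z_(t-1) - x_(t-1)|^2 + |x_t - z_(t-1)|^2); by smoothness these are at least
   gamma_(t-2) |F x_t - F x_(t-1)|^2 / (4 beta^2).  Summing over t telescopes the distances to y,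
   leaving gamma_(T-1) D^2 / 2, which Young's inequality splits into a D^4 beta^2 term and a
   multiple of the sum of squared differences.  After tau the step size exceeds 2 sqrt 2 beta and
   the negative terms absorb everything; up to tau the definition of gamma bounds the sum of
   squared differences by 8 beta^2 eta^2 plus the last two.  Monotonicity of F turns the
   regret bound into the bound on the gap of the average. *)

lemma inner_three_point:
  fixes a b c :: "'a::real_inner"
  shows "inner (a - b) (c - a) = ((norm (c - b))\<^sup>2 - (norm (a - b))\<^sup>2 - (norm (c - a))\<^sup>2) / 2"
  by (simp add: power2_norm_eq_inner inner_diff_left inner_diff_right inner_commute field_simps)

lemma norm_add_sq_le: "(norm (a + b))\<^sup>2 \<le> 2 * (norm a)\<^sup>2 + 2 * (norm (b::'a::real_inner))\<^sup>2"
proof -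
  have "(norm (a + b))\<^sup>2 + (norm (a - b))\<^sup>2 = 2 * (norm a)\<^sup>2 + 2 * (norm b)\<^sup>2"
    by (simp add: power2_norm_eq_inner inner_add_left inner_add_right inner_diff_left
        inner_diff_right inner_commute)
  then show ?thesis using zero_le_power2[of "norm (a - b)"] by linarith
qed

lemma weighted_sum_squares_bound:
  fixes a b c :: real
  assumes "0 < c"
  shows "a * b \<le> a\<^sup>2 / (2 * c) + c / 2 * b\<^sup>2"
proof -
  have "0 \<le> (a - c * b)\<^sup>2 / (2 * c)" using assms by simp
  also have "\<dots> = a\<^sup>2 / (2 * c) + c / 2 * b\<^sup>2 - a * b"
    using assms by (simp add: field_simps power2_eq_square)
  finally show ?thesis by simp
qed

lemma nonneg_if_nonneg_plus_small_multiple: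
  fixes L K :: real
  assumes "\<And>s. 0 < s \<Longrightarrow> s < 1 \<Longrightarrow> 0 \<le> L + s * K"
  shows "0 \<le> L"
proof (rule tendsto_lowerbound)
  show "((\<lambda>s. L + s * K) \<longlongrightarrow> L) (at_right 0)"
    by (auto intro!: tendsto_eq_intros)
  show "\<forall>\<^sub>F s in at_right 0. 0 \<le> L + s * K"
    using eventually_at_right_real[of 0 1] by (rule eventually_mono) (auto intro: assms)
qed simp

lemma prox_obj_add_scaleR:
  "prox_obj g a z b x0 (u + s *\<^sub>R h) - prox_obj g a z b x0 u
   = s * inner (g + a *\<^sub>R (u - z) + b *\<^sub>R (u - x0)) h + s\<^sup>2 * (a + b) / 2 * (norm h)\<^sup>2"
  unfolding prox_obj_def power2_norm_eq_inner
  by (simp add: inner_add_left inner_add_right inner_diff_left inner_diff_right inner_commute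
      algebra_simps power2_eq_square)

lemma prox_obj_argmin_variational_ineq:
  assumes "convex X" and u: "is_argmin_on X (prox_obj g a z b x0) u" and "v \<in> X"
  shows "0 \<le> inner (g + a *\<^sub>R (u - z) + b *\<^sub>R (u - x0)) (v - u)"
proof (rule nonneg_if_nonneg_plus_small_multiple)
  fix s :: real
  assume s: "0 < s" "s < 1"
  let ?L = "inner (g + a *\<^sub>R (u - z) + b *\<^sub>R (u - x0)) (v - u)"
    and ?K = "(a + b) / 2 * (norm (v - u))\<^sup>2"
  have "u + s *\<^sub>R (v - u) = (1 - s) *\<^sub>R u + s *\<^sub>R v" by (simp add: algebra_simps)
  also have "\<dots> \<in> X" using assms s u by (simp add: convex_def is_argmin_on_def)
  finally have "0 \<le> prox_obj g a z b x0 (u + s *\<^sub>R (v - u)) - prox_obj g a z b x0 u"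
    using u by (simp add: is_argmin_on_def)
  also have "\<dots> = s * (?L + s * ?K)"
    unfolding prox_obj_add_scaleR by (simp add: power2_eq_square algebra_simps)
  finally show "0 \<le> ?L + s * ?K" using s by (simp add: zero_le_mult_iff)
qed

lemma extragradient_three_point_ineq:
  fixes g1 g2 x z zp x0 y :: "'a::real_inner" and A B :: real
  assumes "0 \<le> inner (g1 + A *\<^sub>R (x - zp) + B *\<^sub>R (x - x0)) (z - x)"
    and "0 \<le> inner (g2 + A *\<^sub>R (z - zp) + B *\<^sub>R (z - x0)) (y - z)"
  shows "inner g2 (x - y) \<le> A / 2 * (norm (y - zp))\<^sup>2 - (A + B) / 2 * (norm (y - z))\<^sup>2
     + B / 2 * (norm (y - x0))\<^sup>2 - (A + B) / 2 * (norm (z - x))\<^sup>2 - A / 2 * (norm (x - zp))\<^sup>2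
     - B / 2 * (norm (x - x0))\<^sup>2 + inner (g2 - g1) (x - z)"
  using assms unfolding inner_add_left inner_scaleR_left inner_three_point
  by (simp add: inner_diff_left inner_diff_right field_simps)

lemma prox_stability_ineq:
  fixes g1 g2 x z zp x0 :: "'a::real_inner" and A B :: real
  assumes hx: "0 \<le> inner (g1 + A *\<^sub>R (x - zp) + B *\<^sub>R (x - x0)) (z - x)"
    and hz: "0 \<le> inner (g2 + A *\<^sub>R (z - zp) + B *\<^sub>R (z - x0)) (x - z)"
    and AB: "0 < A + B"
  shows "inner (g2 - g1) (x - z) \<le> (norm (g2 - g1))\<^sup>2 / (A + B)"
proof -
  have strong: "(A + B) * (norm (x - z))\<^sup>2 \<le> inner (g2 - g1) (x - z)"
    using add_nonneg_nonneg[OF hx hz]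
    by (simp add: power2_norm_eq_inner inner_add_left inner_diff_left inner_diff_right
        inner_commute algebra_simps)
  have "inner (g2 - g1) (x - z) \<le> norm (g2 - g1) * norm (x - z)"
    by (rule Cauchy_Schwarz_ineq2[THEN abs_le_D1])
  also have "\<dots> \<le> (norm (g2 - g1))\<^sup>2 / (2 * (A + B)) + (A + B) / 2 * (norm (x - z))\<^sup>2"
    using AB by (rule weighted_sum_squares_bound)
  finally have "inner (g2 - g1) (x - z) \<le> (norm (g2 - g1))\<^sup>2 / (2 * (A + B)) + inner (g2 - g1) (x - z) / 2"
    using strong by linarith
  then show ?thesis using AB by (simp add: field_simps)
qed

lemma optimistic_prox_step:
  fixes g1 g2 zp x0 x z y :: "'a::real_inner" and A B :: real
  assumes X: "convex X"
    and x: "is_argmin_on X (prox_obj g1 A zp B x0) x"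
    and z: "is_argmin_on X (prox_obj g2 A zp B x0) z"
    and y: "y \<in> X" and AB: "0 < A + B"
  shows "inner g2 (x - y) \<le> A / 2 * (norm (y - zp))\<^sup>2 - (A + B) / 2 * (norm (y - z))\<^sup>2
     + B / 2 * (norm (y - x0))\<^sup>2 - (A + B) / 2 * (norm (z - x))\<^sup>2 - A / 2 * (norm (x - zp))\<^sup>2
     - B / 2 * (norm (x - x0))\<^sup>2 + (norm (g2 - g1))\<^sup>2 / (A + B)"
proof -
  have in_X: "x \<in> X" "z \<in> X" using x z by (simp_all add: is_argmin_on_def)
  note vi_x = prox_obj_argmin_variational_ineq[OF X x in_X(2)]
  note vi_z = prox_obj_argmin_variational_ineq[OF X z]
  show ?thesis
    using extragradient_three_point_ineq[OF vi_x vi_z[OF y]]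
      prox_stability_ineq[OF vi_x vi_z[OF in_X(1)] AB]
    by linarith
qed

locale adapeg_run =
  fixes X :: "'a::real_inner set" and F :: "'a \<Rightarrow> 'a"
    and \<beta> \<gamma>0 \<eta> :: real and T :: nat and x z :: "nat \<Rightarrow> 'a"
  assumes X_convex: "convex X" and F_monotone: "monotone_op X F" and F_smooth: "smooth_op X \<beta> F"
    and beta_nonneg: "0 \<le> \<beta>" and gamma0_pos: "0 < \<gamma>0" and eta_pos: "0 < \<eta>" and T_pos: "1 \<le> T"
    and x0_in: "x 0 \<in> X"
    and x_step: "\<And>t. 1 \<le> t \<Longrightarrow> t \<le> T \<Longrightarrow>
       is_argmin_on X (prox_obj (F (x (t - 1))) (gam \<eta> \<gamma>0 F x (int t - 2)) (z (t - 1))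
          (gam \<eta> \<gamma>0 F x (int t - 1) - gam \<eta> \<gamma>0 F x (int t - 2)) (x 0)) (x t)"
    and z_step: "\<And>t. 1 \<le> t \<Longrightarrow> t \<le> T \<Longrightarrow>
       is_argmin_on X (prox_obj (F (x t)) (gam \<eta> \<gamma>0 F x (int t - 2)) (z (t - 1))
          (gam \<eta> \<gamma>0 F x (int t - 1) - gam \<eta> \<gamma>0 F x (int t - 2)) (x 0)) (z t)"
begin

(* \<Gamma> t is gamma_(t-1): iteration t uses the weights \<Gamma> (t - 1) and \<Gamma> t - \<Gamma> (t - 1). *)
definition \<Gamma> :: "nat \<Rightarrow> real" where
  "\<Gamma> t = gam \<eta> \<gamma>0 F x (int t - 1)"

definition \<delta> :: "nat \<Rightarrow> real" where
  "\<delta> t = (norm (F (x t) - F (x (t - 1))))\<^sup>2"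

lemma \<delta>_nonneg: "0 \<le> \<delta> t"
  by (simp add: \<delta>_def)

lemma \<Gamma>_0 [simp]: "\<Gamma> 0 = 0"
  by (simp add: \<Gamma>_def gam_def)

lemma \<Gamma>_eq:
  assumes "1 \<le> t"
  shows "\<Gamma> t = sqrt (\<eta>\<^sup>2 * \<gamma>0\<^sup>2 + (\<Sum>s\<in>{1..t - 1}. \<delta> s)) / \<eta>"
proof -
  have "nat (int t - 1) = t - 1" using assms by simp
  then show ?thesis using assms by (simp add: \<Gamma>_def gam_def \<delta>_def)
qed

lemma gam_eq_\<Gamma>:
  assumes "1 \<le> t"
  shows "gam \<eta> \<gamma>0 F x (int t - 2) = \<Gamma> (t - 1)"
proof -
  have "int (t - 1) - 1 = int t - 2" using assms by simp
  then show ?thesis by (simp add: \<Gamma>_def)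
qed

lemma \<Gamma>_1: "\<Gamma> 1 = \<gamma>0"
  using \<Gamma>_eq[of 1] eta_pos gamma0_pos by (simp add: real_sqrt_mult)

lemma \<Gamma>_mono:
  assumes "s \<le> t"
  shows "\<Gamma> s \<le> \<Gamma> t"
proof (cases "s = 0")
  case True
  then show ?thesis
    using eta_pos by (cases "t = 0") (simp_all add: \<Gamma>_eq sum_nonneg \<delta>_nonneg)
next
  case False
  have "(\<Sum>r\<in>{1..s - 1}. \<delta> r) \<le> (\<Sum>r\<in>{1..t - 1}. \<delta> r)"
    using assms by (intro sum_mono2) (auto simp: \<delta>_nonneg)
  then show ?thesis using False assms eta_pos by (simp add: \<Gamma>_eq divide_right_mono)
qed

lemma \<Gamma>_nonneg: "0 \<le> \<Gamma> t"
  using \<Gamma>_mono[of 0 t] by simp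

lemma \<Gamma>_ge_gamma0: "1 \<le> t \<Longrightarrow> \<gamma>0 \<le> \<Gamma> t"
  using \<Gamma>_mono \<Gamma>_1 by metis

lemma \<Gamma>_T_le: "\<Gamma> T \<le> \<gamma>0 + sqrt (\<Sum>t\<in>{1..T}. \<delta> t) / \<eta>"
proof -
  have "\<eta> * \<Gamma> T = sqrt (\<eta>\<^sup>2 * \<gamma>0\<^sup>2 + (\<Sum>t\<in>{1..T - 1}. \<delta> t))"
    using eta_pos T_pos by (simp add: \<Gamma>_eq)
  also have "\<dots> \<le> sqrt (\<eta>\<^sup>2 * \<gamma>0\<^sup>2 + (\<Sum>t\<in>{1..T}. \<delta> t))"
    by (simp add: sum_mono2 \<delta>_nonneg)
  also have "\<dots> \<le> sqrt (\<eta>\<^sup>2 * \<gamma>0\<^sup>2) + sqrt (\<Sum>t\<in>{1..T}. \<delta> t)"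
    by (rule sqrt_add_le_add_sqrt) (simp_all add: sum_nonneg \<delta>_nonneg)
  also have "sqrt (\<eta>\<^sup>2 * \<gamma>0\<^sup>2) = \<eta> * \<gamma>0"
    using eta_pos gamma0_pos by (simp add: real_sqrt_mult)
  finally show ?thesis using eta_pos by (simp add: field_simps)
qed

lemma x_in_X: "t \<le> T \<Longrightarrow> x t \<in> X"
  using x0_in x_step[of t] by (cases "t = 0") (auto simp: is_argmin_on_def)

lemma x_argmin:
  assumes "1 \<le> t" "t \<le> T"
  shows "is_argmin_on X (prox_obj (F (x (t - 1))) (\<Gamma> (t - 1)) (z (t - 1)) (\<Gamma> t - \<Gamma> (t - 1)) (x 0)) (x t)"
  using x_step[OF assms] unfolding gam_eq_\<Gamma>[OF assms(1)] \<Gamma>_def[symmetric] .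

lemma z_argmin:
  assumes "1 \<le> t" "t \<le> T"
  shows "is_argmin_on X (prox_obj (F (x t)) (\<Gamma> (t - 1)) (z (t - 1)) (\<Gamma> t - \<Gamma> (t - 1)) (x 0)) (z t)"
  using z_step[OF assms] unfolding gam_eq_\<Gamma>[OF assms(1)] \<Gamma>_def[symmetric] .

lemma \<delta>_le:
  assumes "1 \<le> t" "t \<le> T"
  shows "\<delta> t \<le> \<beta>\<^sup>2 * (norm (x t - x (t - 1)))\<^sup>2"
proof -
  have "norm (F (x t) - F (x (t - 1))) \<le> \<beta> * norm (x t - x (t - 1))"
    using F_smooth x_in_X assms unfolding smooth_op_def by simp
  then show ?thesis unfolding \<delta>_def power_mult_distrib[symmetric] by (rule power_mono) simp
qed

lemma one_step_bound:
  assumes t: "1 \<le> t" "t \<le> T" and y: "y \<in> X" "norm (y - x 0) \<le> D"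
  shows "inner (F (x t)) (x t - y) \<le> \<Gamma> (t - 1) / 2 * (norm (y - z (t - 1)))\<^sup>2 - \<Gamma> t / 2 * (norm (y - z t))\<^sup>2
     + (\<Gamma> t - \<Gamma> (t - 1)) / 2 * D\<^sup>2 + \<delta> t / \<Gamma> t
     - (\<Gamma> t / 2 * (norm (z t - x t))\<^sup>2 + \<Gamma> (t - 1) / 2 * (norm (x t - z (t - 1)))\<^sup>2)
     - (\<Gamma> t - \<Gamma> (t - 1)) / 2 * (norm (x t - x 0))\<^sup>2"
proof -
  have "0 < \<Gamma> (t - 1) + (\<Gamma> t - \<Gamma> (t - 1))" using \<Gamma>_ge_gamma0[OF t(1)] gamma0_pos by simp
  note step = optimistic_prox_step[OF X_convex x_argmin[OF t] z_argmin[OF t] y(1) this]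
  have "(\<Gamma> t - \<Gamma> (t - 1)) / 2 * (norm (y - x 0))\<^sup>2 \<le> (\<Gamma> t - \<Gamma> (t - 1)) / 2 * D\<^sup>2"
    using \<Gamma>_mono[of "t - 1" t] y(2) by (intro mult_left_mono power_mono) auto
  then show ?thesis using step by (simp add: \<delta>_def)
qed

definition stability_terms :: real where
  "stability_terms = \<gamma>0 / 2 * (norm (x 1 - x 0))\<^sup>2
     + (\<Sum>t\<in>{1..T}. \<Gamma> t / 2 * (norm (z t - x t))\<^sup>2 + \<Gamma> (t - 1) / 2 * (norm (x t - z (t - 1)))\<^sup>2)"

lemma regret_bound:
  assumes y: "y \<in> X" "norm (y - x 0) \<le> D"
  shows "(\<Sum>t\<in>{1..T}. inner (F (x t)) (x t - y))
    \<le> \<Gamma> T / 2 * D\<^sup>2 + (\<Sum>t\<in>{1..T}. \<delta> t / \<Gamma> t) - stability_terms"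
proof -
  define \<Phi> where "\<Phi> t = \<Gamma> t / 2 * (norm (y - z t))\<^sup>2" for t
  define S where "S t = \<Gamma> t / 2 * (norm (z t - x t))\<^sup>2 + \<Gamma> (t - 1) / 2 * (norm (x t - z (t - 1)))\<^sup>2" for t
  define B where "B t = (\<Gamma> t - \<Gamma> (t - 1)) / 2" for t
  have telescope: "(\<Sum>t\<in>{1..T}. f t - f (t - 1)) = f T - f 0" for f :: "nat \<Rightarrow> real"
    using sum_telescope''[of 0 T f] by simp
  have "(\<Sum>t\<in>{1..T}. inner (F (x t)) (x t - y))
      \<le> (\<Sum>t\<in>{1..T}. B t * D\<^sup>2 - (\<Phi> t - \<Phi> (t - 1)) + \<delta> t / \<Gamma> t - S t - B t * (norm (x t - x 0))\<^sup>2)"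
    using one_step_bound[OF _ _ y] unfolding \<Phi>_def S_def B_def by (intro sum_mono) force
  also have "\<dots> = (\<Sum>t\<in>{1..T}. B t) * D\<^sup>2 - (\<Sum>t\<in>{1..T}. \<Phi> t - \<Phi> (t - 1)) + (\<Sum>t\<in>{1..T}. \<delta> t / \<Gamma> t)
      - (\<Sum>t\<in>{1..T}. S t) - (\<Sum>t\<in>{1..T}. B t * (norm (x t - x 0))\<^sup>2)"
    by (simp only: sum.distrib sum_subtractf sum_distrib_right)
  also have "(\<Sum>t\<in>{1..T}. B t) = \<Gamma> T / 2"
    using telescope[of \<Gamma>] by (simp add: B_def flip: sum_divide_distrib)
  also have "(\<Sum>t\<in>{1..T}. \<Phi> t - \<Phi> (t - 1)) = \<Phi> T"
    using telescope[of \<Phi>] by (simp add: \<Phi>_def)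
  finally have sum_bound: "(\<Sum>t\<in>{1..T}. inner (F (x t)) (x t - y)) \<le> \<Gamma> T / 2 * D\<^sup>2 - \<Phi> T
      + (\<Sum>t\<in>{1..T}. \<delta> t / \<Gamma> t) - (\<Sum>t\<in>{1..T}. S t) - (\<Sum>t\<in>{1..T}. B t * (norm (x t - x 0))\<^sup>2)" .
  have "\<gamma>0 / 2 * (norm (x 1 - x 0))\<^sup>2 \<le> (\<Sum>t\<in>{1..T}. B t * (norm (x t - x 0))\<^sup>2)"
  proof -
    have "\<gamma>0 / 2 * (norm (x 1 - x 0))\<^sup>2 = B 1 * (norm (x 1 - x 0))\<^sup>2"
      using \<Gamma>_1 by (simp add: B_def)
    also have "\<dots> \<le> (\<Sum>t\<in>{1..T}. B t * (norm (x t - x 0))\<^sup>2)"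
      using T_pos by (intro member_le_sum) (auto simp: B_def \<Gamma>_mono)
    finally show ?thesis .
  qed
  moreover have "0 \<le> \<Phi> T" by (simp add: \<Phi>_def \<Gamma>_nonneg)
  ultimately show ?thesis using sum_bound unfolding stability_terms_def S_def by linarith
qed

lemma \<delta>_le_stability:
  assumes "2 \<le> t" "t \<le> T"
  shows "\<delta> t \<le> 2 * \<beta>\<^sup>2 * ((norm (z (t - 1) - x (t - 1)))\<^sup>2 + (norm (x t - z (t - 1)))\<^sup>2)"
proof -
  have "\<delta> t \<le> \<beta>\<^sup>2 * (norm ((x t - z (t - 1)) + (z (t - 1) - x (t - 1))))\<^sup>2"
    using \<delta>_le[of t] assms by simp
  also have "\<dots> \<le> \<beta>\<^sup>2 * (2 * (norm (x t - z (t - 1)))\<^sup>2 + 2 * (norm (z (t - 1) - x (t - 1)))\<^sup>2)"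
    by (intro mult_left_mono norm_add_sq_le) simp
  finally show ?thesis by (simp add: algebra_simps)
qed

(* For t = 1 the only available control is the term \<gamma>0 / 2 * (norm (x 1 - x 0))\<^sup>2. *)
definition \<kappa> :: "nat \<Rightarrow> real" where
  "\<kappa> t = (if t = 1 then 2 * \<gamma>0 else \<Gamma> (t - 1))"

lemma weighted_\<delta>_le_stability_terms:
  "(\<Sum>t\<in>{1..T}. \<kappa> t * \<delta> t) \<le> 4 * \<beta>\<^sup>2 * stability_terms"
proof -
  define a where "a t = \<Gamma> t / 2 * (norm (z t - x t))\<^sup>2" for t
  define b where "b t = \<Gamma> (t - 1) / 2 * (norm (x t - z (t - 1)))\<^sup>2" for t
  obtain m where m: "T = Suc m" using T_pos by (cases T) auto
  have first: "\<kappa> 1 * \<delta> 1 \<le> 4 * \<beta>\<^sup>2 * (\<gamma>0 / 2 * (norm (x 1 - x 0))\<^sup>2)"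
    using \<delta>_le[of 1] T_pos gamma0_pos by (simp add: \<kappa>_def)
  have later: "\<kappa> t * \<delta> t \<le> 4 * \<beta>\<^sup>2 * (a (t - 1) + b t)" if t: "t \<in> {2..T}" for t
  proof -
    have "\<Gamma> (t - 1) * \<delta> t \<le> \<Gamma> (t - 1) * (2 * \<beta>\<^sup>2 * ((norm (z (t - 1) - x (t - 1)))\<^sup>2 + (norm (x t - z (t - 1)))\<^sup>2))"
      using \<delta>_le_stability[of t] t by (intro mult_left_mono) (auto simp: \<Gamma>_nonneg)
    then show ?thesis using t by (simp add: \<kappa>_def a_def b_def algebra_simps)
  qed
  have "(\<Sum>t\<in>{2..T}. \<kappa> t * \<delta> t) \<le> (\<Sum>t\<in>{2..T}. 4 * \<beta>\<^sup>2 * (a (t - 1) + b t))"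
    by (rule sum_mono) (rule later)
  moreover have shift: "(\<Sum>t\<in>{2..T}. a (t - 1)) = (\<Sum>t\<in>{1..m}. a t)"
    unfolding m numeral_2_eq_2 sum.shift_bounds_cl_Suc_ivl by simp
  ultimately have rest: "(\<Sum>t\<in>{2..T}. \<kappa> t * \<delta> t) \<le> 4 * \<beta>\<^sup>2 * ((\<Sum>t\<in>{1..m}. a t) + (\<Sum>t\<in>{2..T}. b t))"
    by (simp add: sum.distrib flip: sum_distrib_left)
  have "(\<Sum>t\<in>{1..T}. \<kappa> t * \<delta> t) = \<kappa> 1 * \<delta> 1 + (\<Sum>t\<in>{2..T}. \<kappa> t * \<delta> t)"
    using sum.atLeast_Suc_atMost[OF T_pos] by (simp add: numeral_2_eq_2)
  also have "\<dots> \<le> 4 * \<beta>\<^sup>2 * (\<gamma>0 / 2 * (norm (x 1 - x 0))\<^sup>2)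
      + 4 * \<beta>\<^sup>2 * ((\<Sum>t\<in>{1..m}. a t) + (\<Sum>t\<in>{2..T}. b t))"
    using first rest by linarith
  also have "\<dots> \<le> 4 * \<beta>\<^sup>2 * (\<gamma>0 / 2 * (norm (x 1 - x 0))\<^sup>2)
      + 4 * \<beta>\<^sup>2 * ((\<Sum>t\<in>{1..T}. a t) + (\<Sum>t\<in>{1..T}. b t))"
    unfolding m by (intro add_left_mono mult_left_mono add_mono sum_mono2) (auto simp: a_def b_def \<Gamma>_nonneg)
  also have "\<dots> = 4 * \<beta>\<^sup>2 * stability_terms"
    by (simp add: stability_terms_def a_def b_def sum.distrib algebra_simps)
  finally show ?thesis .
qed

definition \<tau> :: nat where
  "\<tau> = Max {t\<in>{1..T}. \<Gamma> (t - 1) \<le> 2 * sqrt 2 * \<beta>}"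

lemma \<tau>_eq: "\<tau> = Max {t\<in>{1..T}. gam \<eta> \<gamma>0 F x (int t - 2) \<le> 2 * sqrt 2 * \<beta>}"
  unfolding \<tau>_def by (rule arg_cong[where f = Max]) (auto simp: gam_eq_\<Gamma>)

lemma \<tau>_mem: "\<tau> \<in> {1..T}" "\<Gamma> (\<tau> - 1) \<le> 2 * sqrt 2 * \<beta>"
proof -
  have "\<tau> \<in> {t\<in>{1..T}. \<Gamma> (t - 1) \<le> 2 * sqrt 2 * \<beta>}"
    unfolding \<tau>_def using T_pos beta_nonneg by (intro Max_in) auto
  then show "\<tau> \<in> {1..T}" "\<Gamma> (\<tau> - 1) \<le> 2 * sqrt 2 * \<beta>" by simp_all
qed

lemma \<Gamma>_after_\<tau>:
  assumes "\<tau> < t" "t \<le> T"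
  shows "2 * sqrt 2 * \<beta> < \<Gamma> (t - 1)"
proof (rule ccontr)
  assume "\<not> ?thesis"
  then have "t \<le> \<tau>" unfolding \<tau>_def using assms \<tau>_mem(1) by (intro Max_ge) auto
  then show False using assms(1) by simp
qed

lemma sum_\<delta>_upto_\<tau>: "(\<Sum>t\<in>{1..\<tau>}. \<delta> t) \<le> 8 * \<beta>\<^sup>2 * \<eta>\<^sup>2 + \<delta> \<tau> + \<delta> (\<tau> - 1)"
proof (cases "\<tau> = 1")
  case True
  then show ?thesis by (simp add: \<delta>_def)
next
  case False
  then obtain m where m: "\<tau> = Suc (Suc m)" using \<tau>_mem(1) by (cases \<tau>; cases "\<tau> - 1") auto
  have "sqrt (\<eta>\<^sup>2 * \<gamma>0\<^sup>2 + (\<Sum>t\<in>{1..m}. \<delta> t)) \<le> 2 * sqrt 2 * \<beta> * \<eta>"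
    using \<tau>_mem(2) \<Gamma>_eq[of "Suc m"] eta_pos by (simp add: m field_simps)
  then have "\<eta>\<^sup>2 * \<gamma>0\<^sup>2 + (\<Sum>t\<in>{1..m}. \<delta> t) \<le> 8 * \<beta>\<^sup>2 * \<eta>\<^sup>2"
    by (auto dest!: sqrt_le_D simp: power_mult_distrib)
  moreover have "0 \<le> \<eta>\<^sup>2 * \<gamma>0\<^sup>2" by simp
  ultimately have "(\<Sum>t\<in>{1..m}. \<delta> t) \<le> 8 * \<beta>\<^sup>2 * \<eta>\<^sup>2" by linarith
  then show ?thesis by (simp add: m)
qed

lemma \<kappa>_ge_gamma0: "1 \<le> t \<Longrightarrow> \<gamma>0 \<le> \<kappa> t"
  using gamma0_pos \<Gamma>_ge_gamma0[of "t - 1"] by (simp add: \<kappa>_def)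

lemma \<delta>_coefficient_bound:
  assumes \<beta>: "0 < \<beta>" and t: "1 \<le> t" "t \<le> T"
  shows "1 / \<Gamma> t + \<gamma>0 / (8 * \<beta>\<^sup>2) - \<kappa> t / (4 * \<beta>\<^sup>2) \<le> (if t \<le> \<tau> then 1 / \<gamma>0 else 0)"
proof (cases "t \<le> \<tau>")
  case True
  have "1 / \<Gamma> t \<le> 1 / \<gamma>0" using \<Gamma>_ge_gamma0[OF t(1)] gamma0_pos by (simp add: frac_le)
  moreover have "\<gamma>0 / (8 * \<beta>\<^sup>2) \<le> \<kappa> t / (4 * \<beta>\<^sup>2)"
    using \<kappa>_ge_gamma0[OF t(1)] gamma0_pos \<beta> by (simp add: field_simps)
  ultimately show ?thesis using True by simp
next
  case False
  define g where "g = \<Gamma> (t - 1)"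
  have pos: "0 < 2 * sqrt 2 * \<beta>" using \<beta> by simp
  have above: "2 * sqrt 2 * \<beta> < g" using \<Gamma>_after_\<tau>[of t] False t by (simp add: g_def)
  have g: "0 < g" "8 * \<beta>\<^sup>2 < g\<^sup>2"
    using pos above power_strict_mono[OF above, of 2] by (linarith, simp add: power_mult_distrib)
  have "t \<noteq> 1" using False \<tau>_mem(1) by auto
  then have \<kappa>: "\<kappa> t = g" by (simp add: \<kappa>_def g_def)
  have "1 / \<Gamma> t \<le> 1 / g" using g \<Gamma>_mono[of "t - 1" t] by (simp add: g_def frac_le)
  also have "\<dots> \<le> g / (8 * \<beta>\<^sup>2)" using g \<beta> by (simp add: field_simps power2_eq_square)
  finally have "1 / \<Gamma> t \<le> g / (8 * \<beta>\<^sup>2)" .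
  moreover have "\<gamma>0 \<le> g" using \<Gamma>_ge_gamma0[of "t - 1"] \<open>t \<noteq> 1\<close> t by (simp add: g_def)
  then have "\<gamma>0 / (8 * \<beta>\<^sup>2) \<le> g / (8 * \<beta>\<^sup>2)" by (simp add: divide_right_mono)
  moreover have "\<kappa> t / (4 * \<beta>\<^sup>2) = g / (8 * \<beta>\<^sup>2) + g / (8 * \<beta>\<^sup>2)"
    using \<beta> by (simp add: \<kappa> field_simps)
  ultimately have "1 / \<Gamma> t + \<gamma>0 / (8 * \<beta>\<^sup>2) - \<kappa> t / (4 * \<beta>\<^sup>2) \<le> 0" by linarith
  then show ?thesis using False by simp
qed

lemma \<Gamma>_T_term_bound:
  assumes \<beta>: "0 < \<beta>"
  shows "\<Gamma> T / 2 * D\<^sup>2 \<le> \<gamma>0 / 2 * D\<^sup>2 + 1 / (2 * \<gamma>0) * D ^ 4 / \<eta>\<^sup>2 * \<beta>\<^sup>2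
     + \<gamma>0 / (8 * \<beta>\<^sup>2) * (\<Sum>t\<in>{1..T}. \<delta> t)"
proof -
  define S where "S = (\<Sum>t\<in>{1..T}. \<delta> t)"
  have S: "0 \<le> S" by (simp add: S_def sum_nonneg \<delta>_nonneg)
  have "\<Gamma> T / 2 * D\<^sup>2 \<le> (\<gamma>0 + sqrt S / \<eta>) / 2 * D\<^sup>2"
    using \<Gamma>_T_le by (simp add: S_def mult_right_mono divide_right_mono)
  also have "\<dots> = \<gamma>0 / 2 * D\<^sup>2 + (D\<^sup>2 * \<beta> / \<eta>) * (sqrt S / (2 * \<beta>))"
    using \<beta> by (simp add: field_simps)
  finally have "\<Gamma> T / 2 * D\<^sup>2 \<le> \<gamma>0 / 2 * D\<^sup>2 + (D\<^sup>2 * \<beta> / \<eta>) * (sqrt S / (2 * \<beta>))" .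
  moreover have "(D\<^sup>2 * \<beta> / \<eta>) * (sqrt S / (2 * \<beta>))
      \<le> (D\<^sup>2 * \<beta> / \<eta>)\<^sup>2 / (2 * \<gamma>0) + \<gamma>0 / 2 * (sqrt S / (2 * \<beta>))\<^sup>2"
    using gamma0_pos by (rule weighted_sum_squares_bound)
  moreover have "(D\<^sup>2 * \<beta> / \<eta>)\<^sup>2 / (2 * \<gamma>0) + \<gamma>0 / 2 * (sqrt S / (2 * \<beta>))\<^sup>2
      = 1 / (2 * \<gamma>0) * D ^ 4 / \<eta>\<^sup>2 * \<beta>\<^sup>2 + \<gamma>0 / (8 * \<beta>\<^sup>2) * S"
    using S by (simp add: power_divide power_mult_distrib field_simps)
  ultimately show ?thesis by (simp add: S_def)
qed

definition rate_bound :: "real \<Rightarrow> real" where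
  "rate_bound D = 1 / (2 * \<gamma>0) * D ^ 4 / \<eta>\<^sup>2 * \<beta>\<^sup>2 + \<gamma>0 / 2 * D\<^sup>2
     + 8 / \<gamma>0 * \<beta>\<^sup>2 * \<eta>\<^sup>2 + 1 / \<gamma>0 * \<delta> \<tau> + 1 / \<gamma>0 * \<delta> (\<tau> - 1)"

lemma regret_remainder_le_rate_bound_pos:
  assumes \<beta>: "0 < \<beta>"
  shows "\<Gamma> T / 2 * D\<^sup>2 + (\<Sum>t\<in>{1..T}. \<delta> t / \<Gamma> t) - stability_terms \<le> rate_bound D"
proof -
  have "(\<Sum>t\<in>{1..T}. \<delta> t / \<Gamma> t) + \<gamma>0 / (8 * \<beta>\<^sup>2) * (\<Sum>t\<in>{1..T}. \<delta> t)
        - (\<Sum>t\<in>{1..T}. \<kappa> t * \<delta> t) / (4 * \<beta>\<^sup>2)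
      = (\<Sum>t\<in>{1..T}. (1 / \<Gamma> t + \<gamma>0 / (8 * \<beta>\<^sup>2) - \<kappa> t / (4 * \<beta>\<^sup>2)) * \<delta> t)"
    by (simp add: sum_distrib_left sum_divide_distrib sum_subtractf sum.distrib algebra_simps)
  also have "\<dots> \<le> (\<Sum>t\<in>{1..T}. (if t \<le> \<tau> then 1 / \<gamma>0 else 0) * \<delta> t)"
    using \<delta>_coefficient_bound[OF \<beta>] by (intro sum_mono mult_right_mono) (auto simp: \<delta>_nonneg)
  also have "\<dots> = (\<Sum>t\<in>{1..\<tau>}. \<delta> t) / \<gamma>0"
  proof -
    have "(\<Sum>t\<in>{1..T}. (if t \<le> \<tau> then 1 / \<gamma>0 else 0) * \<delta> t)
        = (\<Sum>t\<in>{1..T}. if t \<in> {..\<tau>} then \<delta> t / \<gamma>0 else 0)"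
      by (intro sum.cong) auto
    also have "\<dots> = (\<Sum>t\<in>{1..T} \<inter> {..\<tau>}. \<delta> t / \<gamma>0)"
      by (rule sum.inter_restrict[symmetric]) simp
    also have "{1..T} \<inter> {..\<tau>} = {1..\<tau>}" using \<tau>_mem(1) by auto
    finally show ?thesis by (simp add: sum_divide_distrib)
  qed
  also have "\<dots> \<le> (8 * \<beta>\<^sup>2 * \<eta>\<^sup>2 + \<delta> \<tau> + \<delta> (\<tau> - 1)) / \<gamma>0"
    using sum_\<delta>_upto_\<tau> gamma0_pos by (simp add: divide_right_mono)
  finally have "(\<Sum>t\<in>{1..T}. \<delta> t / \<Gamma> t) + \<gamma>0 / (8 * \<beta>\<^sup>2) * (\<Sum>t\<in>{1..T}. \<delta> t)
        - (\<Sum>t\<in>{1..T}. \<kappa> t * \<delta> t) / (4 * \<beta>\<^sup>2)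
      \<le> 8 / \<gamma>0 * \<beta>\<^sup>2 * \<eta>\<^sup>2 + 1 / \<gamma>0 * \<delta> \<tau> + 1 / \<gamma>0 * \<delta> (\<tau> - 1)"
    by (simp add: add_divide_distrib)
  moreover have "(\<Sum>t\<in>{1..T}. \<kappa> t * \<delta> t) / (4 * \<beta>\<^sup>2) \<le> stability_terms"
    using weighted_\<delta>_le_stability_terms \<beta> by (simp add: field_simps)
  ultimately show ?thesis
    using \<Gamma>_T_term_bound[OF \<beta>, of D] unfolding rate_bound_def by linarith
qed

lemma regret_remainder_le_rate_bound:
  "\<Gamma> T / 2 * D\<^sup>2 + (\<Sum>t\<in>{1..T}. \<delta> t / \<Gamma> t) - stability_terms \<le> rate_bound D"
proof (cases "\<beta> = 0")
  case True
  have \<delta>_0: "\<delta> t = 0" if "t \<in> {1..T}" for t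
    using \<delta>_le[of t] \<delta>_nonneg[of t] that True by auto
  then have "(\<Sum>t\<in>{1..T - 1}. \<delta> t) = 0" by (intro sum.neutral) auto
  then have "\<Gamma> T = \<gamma>0"
    using T_pos eta_pos gamma0_pos by (simp add: \<Gamma>_eq real_sqrt_mult)
  moreover have "0 \<le> stability_terms"
    using gamma0_pos by (simp add: stability_terms_def sum_nonneg \<Gamma>_nonneg)
  moreover have "0 \<le> 1 / \<gamma>0 * \<delta> \<tau> + 1 / \<gamma>0 * \<delta> (\<tau> - 1)"
    using gamma0_pos by (simp add: \<delta>_nonneg)
  ultimately show ?thesis unfolding rate_bound_def using True by (simp add: \<delta>_0)
next
  case False
  then show ?thesis using beta_nonneg regret_remainder_le_rate_bound_pos by simp
qed

lemma Err_bound: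
  assumes "0 \<le> D"
  shows "Err X F (x 0) D ((1 / real T) *\<^sub>R (\<Sum>t\<in>{1..T}. x t)) \<le> (1 / real T) * rate_bound D"
proof -
  have "inner (F y) ((1 / real T) *\<^sub>R (\<Sum>t\<in>{1..T}. x t) - y) \<le> (1 / real T) * rate_bound D"
    if y: "y \<in> X" "norm (y - x 0) \<le> D" for y
  proof -
    have "(1 / real T) *\<^sub>R (\<Sum>t\<in>{1..T}. x t) - y = (1 / real T) *\<^sub>R (\<Sum>t\<in>{1..T}. x t - y)"
      using T_pos by (simp add: sum_subtractf scaleR_diff_right sum_constant_scaleR)
    then have "inner (F y) ((1 / real T) *\<^sub>R (\<Sum>t\<in>{1..T}. x t) - y)
        = (1 / real T) * (\<Sum>t\<in>{1..T}. inner (F y) (x t - y))"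
      by (simp add: inner_sum_right)
    also have "\<dots> \<le> (1 / real T) * (\<Sum>t\<in>{1..T}. inner (F (x t)) (x t - y))"
      using F_monotone x_in_X y(1) unfolding monotone_op_def
      by (intro mult_left_mono sum_mono) (auto simp: inner_diff_left)
    also have "\<dots> \<le> (1 / real T) * rate_bound D"
      using regret_bound[OF y] regret_remainder_le_rate_bound[of D] by (intro mult_left_mono) auto
    finally show ?thesis .
  qed
  moreover have "{y \<in> X. norm (y - x 0) \<le> D} \<noteq> {}" using x0_in assms by auto
  ultimately show ?thesis unfolding Err_def by (intro cSUP_least) auto
qed

end

theorem lemmaC14:
  fixes X :: "'a::euclidean_space set" and F :: "'a \<Rightarrow> 'a"
    and \<beta> \<gamma>0 \<eta> D :: real and T :: nat and x z :: "nat \<Rightarrow> 'a"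
  assumes X_ne: "X \<noteq> {}" and X_closed: "closed X" and X_convex: "convex X"
    and mono: "monotone_op X F" and smooth: "smooth_op X \<beta> F" and beta_nn: "0 \<le> \<beta>"
    and g0: "\<gamma>0 > 0" and eta: "\<eta> > 0" and D: "D > 0" and T: "T \<ge> 1"
    and x0: "x 0 \<in> X" and z0: "z 0 = x 0"
    and x_step: "\<And>t. 1 \<le> t \<Longrightarrow> t \<le> T \<Longrightarrow>
       is_argmin_on X (prox_obj (F (x (t - 1))) (gam \<eta> \<gamma>0 F x (int t - 2)) (z (t - 1))
          (gam \<eta> \<gamma>0 F x (int t - 1) - gam \<eta> \<gamma>0 F x (int t - 2)) (x 0)) (x t)"
    and z_step: "\<And>t. 1 \<le> t \<Longrightarrow> t \<le> T \<Longrightarrow>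
       is_argmin_on X (prox_obj (F (x t)) (gam \<eta> \<gamma>0 F x (int t - 2)) (z (t - 1))
          (gam \<eta> \<gamma>0 F x (int t - 1) - gam \<eta> \<gamma>0 F x (int t - 2)) (x 0)) (z t)"
  defines "\<tau> \<equiv> Max {t\<in>{1..T}. gam \<eta> \<gamma>0 F x (int t - 2) \<le> 2 * sqrt 2 * \<beta>}"
  shows "Err X F (x 0) D ((1 / real T) *\<^sub>R (\<Sum>t\<in>{1..T}. x t))
     \<le> (1 / real T) * ( 1 / (2 * \<gamma>0) * D ^ 4 / \<eta>\<^sup>2 * \<beta>\<^sup>2 + \<gamma>0 / 2 * D\<^sup>2
          + 8 / \<gamma>0 * \<beta>\<^sup>2 * \<eta>\<^sup>2
          + 1 / \<gamma>0 * (norm (F (x \<tau>) - F (x (\<tau> - 1))))\<^sup>2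
          + 1 / \<gamma>0 * (norm (F (x (\<tau> - 1)) - F (x (\<tau> - 2))))\<^sup>2)"
proof -
  (* Nonemptiness and closedness of X only make the prox steps well defined, and z 0 = x 0 is
     not needed because the weight of z 0 is \<Gamma> 0 = 0. *)
  interpret run: adapeg_run X F \<beta> \<gamma>0 \<eta> T x z
    using X_convex mono smooth beta_nn g0 eta T x0 x_step z_step by unfold_locales auto
  have "run.\<tau> = \<tau>" unfolding \<tau>_def by (rule run.\<tau>_eq)
  moreover have "\<tau> - 1 - 1 = \<tau> - 2" by simp
  ultimately show ?thesis
    using run.Err_bound[of D] D unfolding run.rate_bound_def run.\<delta>_def by simp
qed

end
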